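(* Let $d\ge2$ and $\mu>2(d+1)\log d$. Then there exists $\epsilon>0$ such that \[ \operatorname{Poi}(\lambda+\epsilon)\preceq\mathcal{A}\operatorname{Poi}(\lambda)\quad\text{for all }\lambda\ge0. \]
   Context: The operator $\mathcal{A}$ (depending on $d$ and $\mu$): for a probability measure $\pi$ on $\{0,1,2,\dots\}\cup\{\infty\}$, consider a star graph with central vertex $\varnothing'$ and $d+1$ leaves $\varnothing,v_1,\dots,v_d$. Let $X\sim\operatorname{Poi}(\mu)$ and $X_1,\dots,X_d\sim\pi$, all independent; place $X$ particles at $\varnothing'$ and $X_i$ at $v_i$. The particles at $\varnothing'$ and $v_1$ are first-wave particles, active initially. Each particle at $\varnothing'$ moves to a uniformly random leaf among $\varnothing,v_1,\dots,v_d$ and halts; each particle at $v_1$ moves to $\varnothing'$ and then to a uniformly random leaf among $\varnothing,v_2,\dots,v_d$ and halts. For $2\le i\le d$, if some first-wave particle ends at $v_i$, the $X_i$ particles at $v_i$ (second-wave) are activated: each moves to $\varnothing'$ and then to a uniformly random leaf other than $v_i$, and halts; second-wave particles activate nothing. All choices are independent. $\mathcal{A}\pi$ is the law of the number of particles ending at $\varnothing$. $\operatorname{Poi}(0)$ is the point mass at $0$; $\log$ is the natural logarithm. Stochastic dominance: $\pi_1\preceq\pi_2$ means $\pi_1([x,\infty])\le\pi_2([x,\infty])$ for all $x$. *)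

theory Defs
  imports "HOL-Probability.Probability" "HOL-Library.Extended_Nat"
begin

text \<open>Poisson law on the naturals; Poi(0) is the point mass at 0
  (the library's poisson_pmf requires a positive rate).\<close>
definition Poi :: "real \<Rightarrow> nat pmf" where
  "Poi r = (if r > 0 then poisson_pmf r else return_pmf 0)"

definition PoiE :: "real \<Rightarrow> enat pmf" where
  "PoiE r = map_pmf enat (Poi r)"

primrec seq_pmf :: "'a pmf list \<Rightarrow> 'a list pmf" where
  "seq_pmf [] = return_pmf []"
| "seq_pmf (p # ps) = bind_pmf p (\<lambda>x. map_pmf (Cons x) (seq_pmf ps))"

definition iid_list :: "nat \<Rightarrow> 'a pmf \<Rightarrow> 'a list pmf" where
  "iid_list n p = seq_pmf (replicate n p)"

text \<open>Leaves are encoded as naturals: 0 is the leaf \<emptyset>, i \<in> {1..d} is v_i.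
  Xs is the list [X_1,...,X_d]; Xs ! (i-1) = X_i.  Infinite particle counts: a site with infinitely many
  particles that gets activated sends, almost surely, infinitely many particles
  to \<emptyset> (and, for v_1, to every v_i); this almost-sure outcome is used.\<close>
definition opA :: "nat \<Rightarrow> real \<Rightarrow> enat pmf \<Rightarrow> enat pmf" where
  "opA d \<mu> \<pi> =
    bind_pmf (Poi \<mu>) (\<lambda>X.
    bind_pmf (iid_list d \<pi>) (\<lambda>Xs.
      if Xs ! 0 = \<infinity> then return_pmf \<infinity> else
      bind_pmf (iid_list X (pmf_of_set {0..d})) (\<lambda>W0.
      bind_pmf (iid_list (the_enat (Xs ! 0)) (pmf_of_set ({0..d} - {1}))) (\<lambda>W1.
        let act = (\<lambda>i. i \<in> set W0 \<or> i \<in> set W1) in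
        if (\<exists>i\<in>{2..d}. act i \<and> Xs ! (i - 1) = \<infinity>) then return_pmf \<infinity> else
        bind_pmf (seq_pmf (map (\<lambda>i. if act i
                   then iid_list (the_enat (Xs ! (i - 1))) (pmf_of_set ({0..d} - {i}))
                   else return_pmf []) [2..<d+1])) (\<lambda>Ws.
        return_pmf (enat (length (filter (\<lambda>j. j = 0) (W0 @ W1 @ concat Ws)))))))))"

definition stoch_le :: "enat pmf \<Rightarrow> enat pmf \<Rightarrow> bool" where
  "stoch_le p q \<longleftrightarrow> (\<forall>x. measure_pmf.prob p {y. x \<le> y} \<le> measure_pmf.prob q {y. x \<le> y})"

end

theory Submission
  imports Defs "HOL-Combinatorics.Multiset_Permutations"
begin

text \<open>By Poisson thinning the first-wave particles from
  \<open>\<emptyset>'\<close> land on the leaves as independent \<open>Poi(a)\<close>, \<open>a = \<mu>/(d+1)\<close>, and those from \<open>v\<^sub>1\<close> as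
  independent \<open>Poi(t)\<close>, \<open>t = \<lambda>/d\<close>. So \<open>\<A> Poi(\<lambda>)\<close> is \<open>Poi(a + t)\<close> (the particles reaching \<open>\<emptyset>\<close>
  directly) convolved with \<open>d - 1\<close> independent second-wave contributions of the leaves \<open>v\<^sub>i\<close>,
  each equal to \<open>Poi(t)\<close> if \<open>v\<^sub>i\<close> was hit and to \<open>0\<close> otherwise. Writing
  \<open>Poi(\<lambda> + \<epsilon>) = Poi(t + \<epsilon>) \<star> Poi(t)\<^sup>\<star>\<^sup>(\<^sup>d\<^sup>-\<^sup>1\<^sup>)\<close>, it suffices to dominate each \<open>Poi(t)\<close>
  by \<open>Poi(1/(d-1))\<close> convolved with one second-wave contribution, and then \<open>\<epsilon> = a - 1\<close> works.
  At the tail \<open>{\<ge> k}\<close> this one-leaf domination weighs the bound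
  \<open>P(Poi(t) \<ge> k) \<le> (e\<^sup>t - 1) P(Poi(t) = k - 1)\<close> against the gain \<open>(1 - e\<^sup>-\<^sup>c) P(Poi(t) = k - 1)\<close>,
  \<open>c = 1/(d-1)\<close>, of the extra summand; it holds once \<open>e\<^sup>-\<^sup>a \<le> (1 - e\<^sup>-\<^sup>a)(1 - e\<^sup>-\<^sup>c)\<close>, which
  follows from \<open>a > 2 log d\<close>.\<close>

section \<open>Convolution and stochastic order on \<open>\<nat>\<close>\<close>

lemma measure_bind_pmf:
  "measure_pmf.prob (bind_pmf M N) X = (\<integral>x. measure_pmf.prob (N x) X \<partial>M)"
proof -
  have "emeasure (bind_pmf M N) X = (\<integral>\<^sup>+x. ennreal (measure_pmf.prob (N x) X) \<partial>M)"
    unfolding emeasure_bind_pmf by (simp add: measure_pmf.emeasure_eq_measure)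
  also have "\<dots> = ennreal (\<integral>x. measure_pmf.prob (N x) X \<partial>M)"
    by (intro nn_integral_eq_integral measure_pmf.integrable_const_bound[where B=1]) auto
  finally show ?thesis
    by (simp add: measure_pmf.emeasure_eq_measure)
qed

lemma integral_indicator_pos_nat:
  "(\<integral>y. (if 0 < (y::nat) then B else 0) \<partial>measure_pmf r) = B * measure_pmf.prob r {y. 0 < y}"
proof -
  have "(\<lambda>y. if 0 < (y::nat) then B else 0) = (\<lambda>y. B * indicator {y. 0 < y} y)"
    by (auto simp: fun_eq_iff indicator_def)
  then show ?thesis by simp
qed

definition conv_pmf :: "nat pmf \<Rightarrow> nat pmf \<Rightarrow> nat pmf" where
  "conv_pmf p q = bind_pmf p (\<lambda>x. map_pmf ((+) x) q)"

primrec conv_pmf_list :: "nat pmf list \<Rightarrow> nat pmf" where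
  "conv_pmf_list [] = return_pmf 0"
| "conv_pmf_list (p # ps) = conv_pmf p (conv_pmf_list ps)"

lemma conv_pmf_altdef: "conv_pmf p q = bind_pmf p (\<lambda>x. bind_pmf q (\<lambda>y. return_pmf (x + y)))"
  by (simp add: conv_pmf_def map_pmf_def)

lemma conv_pmf_commute: "conv_pmf p q = conv_pmf q p"
  unfolding conv_pmf_altdef by (subst bind_commute_pmf) (simp add: add.commute)

lemma conv_pmf_assoc: "conv_pmf (conv_pmf p q) r = conv_pmf p (conv_pmf q r)"
  unfolding conv_pmf_altdef by (simp add: bind_assoc_pmf bind_return_pmf add.assoc)

lemma conv_pmf_left_commute: "conv_pmf p (conv_pmf q r) = conv_pmf q (conv_pmf p r)"
  by (metis conv_pmf_assoc conv_pmf_commute)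

lemma conv_pmf_return_0 [simp]: "conv_pmf (return_pmf 0) p = p"
  by (simp add: conv_pmf_def bind_return_pmf pmf.map_ident_strong)

lemma conv_pmf_return_0_right [simp]: "conv_pmf p (return_pmf 0) = p"
  by (subst conv_pmf_commute) simp

lemma conv_pmf_bind_left: "conv_pmf (bind_pmf A F) q = bind_pmf A (\<lambda>x. conv_pmf (F x) q)"
  unfolding conv_pmf_def by (simp add: bind_assoc_pmf)

lemma conv_pmf_bind_right: "conv_pmf p (bind_pmf A F) = bind_pmf A (\<lambda>x. conv_pmf p (F x))"
  unfolding conv_pmf_def map_bind_pmf by (rule bind_commute_pmf)

lemma conv_pmf_list_replicate_conv_pmf:
  "conv_pmf_list (replicate m (conv_pmf p q))
     = conv_pmf (conv_pmf_list (replicate m p)) (conv_pmf_list (replicate m q))"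
  by (induction m) (simp_all add: conv_pmf_assoc conv_pmf_left_commute)

lemma pmf_conv_pmf: "pmf (conv_pmf p q) n = (\<Sum>x\<le>n. pmf p x * pmf q (n - x))"
proof -
  have "pmf (map_pmf ((+) x) q) n = (if x \<le> n then pmf q (n - x) else 0)" for x
  proof -
    have "((+) x) -` {n} = (if x \<le> n then {n - x} else {})" by auto
    then show ?thesis by (simp add: pmf_map measure_pmf_single)
  qed
  then show ?thesis
    unfolding conv_pmf_def pmf_bind
    by (subst integral_measure_pmf_real[where A="{..n}"]) (auto split: if_splits intro!: sum.cong)
qed

definition stoch_le_nat :: "nat pmf \<Rightarrow> nat pmf \<Rightarrow> bool" where
  "stoch_le_nat p q \<longleftrightarrow> (\<forall>k. measure_pmf.prob p {y. k \<le> y} \<le> measure_pmf.prob q {y. k \<le> y})"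

lemma stoch_le_nat_refl: "stoch_le_nat p p"
  by (simp add: stoch_le_nat_def)

lemma stoch_le_nat_trans: "stoch_le_nat p q \<Longrightarrow> stoch_le_nat q r \<Longrightarrow> stoch_le_nat p r"
  unfolding stoch_le_nat_def by (meson order_trans)

lemma prob_conv_pmf_atLeast:
  "measure_pmf.prob (conv_pmf p r) {y. k \<le> y} = (\<integral>y. measure_pmf.prob p {x. k - y \<le> x} \<partial>r)"
proof -
  have "measure_pmf.prob (map_pmf ((+) y) p) {y. k \<le> y} = measure_pmf.prob p {x. k - y \<le> x}" for y
    by (auto simp: vimage_def intro: arg_cong[where f="measure_pmf.prob p"])
  then show ?thesis
    by (subst conv_pmf_commute) (simp add: conv_pmf_def measure_bind_pmf)
qed

lemma stoch_le_nat_conv_pmf_left: "stoch_le_nat p q \<Longrightarrow> stoch_le_nat (conv_pmf p r) (conv_pmf q r)"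
  unfolding stoch_le_nat_def prob_conv_pmf_atLeast
  by (auto intro!: integral_mono measure_pmf.integrable_const_bound[where B=1])

lemma stoch_le_nat_conv_pmf:
  "stoch_le_nat p q \<Longrightarrow> stoch_le_nat p' q' \<Longrightarrow> stoch_le_nat (conv_pmf p p') (conv_pmf q q')"
  by (metis stoch_le_nat_conv_pmf_left stoch_le_nat_trans conv_pmf_commute)

lemma stoch_le_nat_conv_pmf_list:
  "list_all2 stoch_le_nat ps qs \<Longrightarrow> stoch_le_nat (conv_pmf_list ps) (conv_pmf_list qs)"
  by (induction ps qs rule: list_all2_induct) (auto intro: stoch_le_nat_conv_pmf stoch_le_nat_refl)

lemma stoch_le_map_pmf_enat:
  assumes "stoch_le_nat p q"
  shows "stoch_le (map_pmf enat p) (map_pmf enat q)"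
  unfolding stoch_le_def
proof
  fix x :: enat
  show "measure_pmf.prob (map_pmf enat p) {y. x \<le> y} \<le> measure_pmf.prob (map_pmf enat q) {y. x \<le> y}"
  proof (cases x)
    case (enat k)
    then have "enat -` {y. x \<le> y} = {y. k \<le> y}" by auto
    then show ?thesis using assms by (simp add: stoch_le_nat_def)
  next
    case infinity
    then have "enat -` {y. x \<le> y} = {}" by auto
    then show ?thesis by simp
  qed
qed

section \<open>Poisson laws\<close>

lemma pmf_Poi: "r \<ge> 0 \<Longrightarrow> pmf (Poi r) k = r ^ k / fact k * exp (- r)"
  by (cases "r = 0") (auto simp: Poi_def indicator_def)

lemma conv_pmf_Poi:
  assumes "a \<ge> 0" "b \<ge> 0"
  shows "conv_pmf (Poi a) (Poi b) = Poi (a + b)"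
proof (rule pmf_eqI)
  fix n
  have "pmf (conv_pmf (Poi a) (Poi b)) n
      = (\<Sum>x\<le>n. a^x / fact x * exp (-a) * (b^(n-x) / fact (n-x) * exp (-b)))"
    using assms by (simp add: pmf_conv_pmf pmf_Poi)
  also have "\<dots> = exp (-(a+b)) * (\<Sum>x\<le>n. a^x * b^(n-x) / (fact x * fact (n-x)))"
    unfolding sum_distrib_left by (intro sum.cong refl) (simp add: exp_add[symmetric] field_simps)
  also have "\<dots> = (\<Sum>x\<le>n. real (n choose x) * a^x * b^(n-x)) / fact n * exp (-(a+b))"
    by (simp add: sum_divide_distrib binomial_fact field_simps)
  also have "\<dots> = pmf (Poi (a+b)) n"
    using assms by (simp add: pmf_Poi binomial_ring)
  finally show "pmf (conv_pmf (Poi a) (Poi b)) n = pmf (Poi (a + b)) n" .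
qed

lemma conv_pmf_list_replicate_Poi:
  "x \<ge> 0 \<Longrightarrow> conv_pmf_list (replicate m (Poi x)) = Poi (real m * x)"
  by (induction m) (simp_all add: Poi_def[of 0] conv_pmf_Poi algebra_simps)

lemma Poi_sums:
  assumes "t \<ge> 0"
  shows "pmf (Poi t) sums 1"
proof -
  have "pmf (Poi t) = (\<lambda>n. t^n /\<^sub>R fact n * exp (-t))"
    using assms by (simp add: pmf_Poi fun_eq_iff divide_inverse)
  then show ?thesis
    using sums_mult2[OF exp_converges[of t], of "exp (-t)"] by (simp add: exp_minus)
qed

lemma prob_Poi_atLeast_sums:
  assumes "t \<ge> 0"
  shows "(\<lambda>n. pmf (Poi t) (n + k)) sums measure_pmf.prob (Poi t) {y. k \<le> y}"
proof -
  have "measure_pmf.prob (Poi t) {y. k \<le> y} = 1 - measure_pmf.prob (Poi t) {..<k}"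
    using measure_pmf.prob_compl[of "{..<k}" "Poi t"] by (simp add: Compl_eq_Diff_UNIV[symmetric] atLeast_def)
  also have "\<dots> = 1 - (\<Sum>i<k. pmf (Poi t) i)"
    by (simp add: measure_measure_pmf_finite)
  finally show ?thesis
    using Poi_sums[OF assms] by (subst sums_iff_shift) simp
qed

lemma fact_mult_fact_le_fact_add: "fact a * fact b \<le> (fact (a + b) :: real)"
proof -
  have "fact a * fact b * 1 \<le> fact a * fact b * real ((a + b) choose a)"
    by (intro mult_left_mono) (simp_all add: Suc_leI)
  also have "\<dots> = fact (a + b)"
    using binomial_fact_lemma[of a "a + b"] by (metis add_diff_cancel_left' le_add1 of_nat_fact of_nat_mult)
  finally show ?thesis by simp
qed

lemma prob_Poi_atLeast_le:
  assumes t: "t \<ge> 0" and k: "k \<ge> 1"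
  shows "measure_pmf.prob (Poi t) {y. k \<le> y} \<le> (exp t - 1) * pmf (Poi t) (k - 1)"
proof -
  have exp_sums: "(\<lambda>n. t^(Suc n) / fact (Suc n)) sums (exp t - 1)"
    using exp_converges[of t] by (subst sums_Suc_iff) (simp add: divide_inverse mult.commute)
  have "pmf (Poi t) (n + k) \<le> pmf (Poi t) (k - 1) * (t^(Suc n) / fact (Suc n))" for n
  proof -
    have nk: "n + k = (k - 1) + Suc n" using k by simp
    have "pmf (Poi t) (n + k) = t^(k-1) * t^(Suc n) * exp (-t) / fact ((k - 1) + Suc n)"
      using t by (simp add: pmf_Poi nk power_add)
    also have "\<dots> \<le> t^(k-1) * t^(Suc n) * exp (-t) / (fact (k - 1) * fact (Suc n))"
      by (rule divide_left_mono[OF fact_mult_fact_le_fact_add]) (simp_all add: t)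
    also have "\<dots> = pmf (Poi t) (k - 1) * (t^(Suc n) / fact (Suc n))"
      using t by (simp add: pmf_Poi)
    finally show ?thesis .
  qed
  then have "measure_pmf.prob (Poi t) {y. k \<le> y} \<le> pmf (Poi t) (k - 1) * (exp t - 1)"
    by (rule sums_le[OF _ prob_Poi_atLeast_sums[OF t] sums_mult[OF exp_sums]])
  then show ?thesis by (simp add: mult.commute)
qed

lemma prob_Poi_pos: "c \<ge> 0 \<Longrightarrow> measure_pmf.prob (Poi c) {y. 0 < y} = 1 - exp (- c)"
proof -
  assume "c \<ge> 0"
  moreover have "{y::nat. 0 < y} = UNIV - {0}" by auto
  ultimately show ?thesis
    using measure_pmf.prob_compl[of "{0}" "Poi c"] by (simp add: measure_pmf_single pmf_Poi)
qed

lemma prob_Poi_add_atLeast_ge: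
  assumes t: "t \<ge> 0" and c: "c \<ge> 0" and k: "k \<ge> 1"
  shows "measure_pmf.prob (Poi (c + t)) {y. k \<le> y} \<ge>
           measure_pmf.prob (Poi t) {y. k \<le> y} + pmf (Poi t) (k - 1) * (1 - exp (- c))"
proof -
  let ?P = "measure_pmf.prob (Poi t)"
  let ?g = "\<lambda>y::nat. ?P {y. k \<le> y} + (if 0 < y then pmf (Poi t) (k - 1) else 0)"
  have split: "?P {x. k - 1 \<le> x} = ?P {y. k \<le> y} + pmf (Poi t) (k - 1)"
  proof -
    have "{x. k - 1 \<le> x} = {y. k \<le> y} \<union> {k - 1}" using k by auto
    moreover have "?P ({y. k \<le> y} \<union> {k - 1}) = ?P {y. k \<le> y} + ?P {k - 1}"
      using k by (intro measure_pmf.finite_measure_Union) auto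
    ultimately show ?thesis by (simp add: measure_pmf_single)
  qed
  have g_le: "?g y \<le> ?P {x. k - y \<le> x}" for y
  proof (cases "0 < y")
    case True
    then have "?P {x. k - 1 \<le> x} \<le> ?P {x. k - y \<le> x}"
      by (intro measure_pmf.finite_measure_mono) auto
    then show ?thesis using True split by simp
  qed simp
  have i1: "integrable (measure_pmf (Poi c)) (\<lambda>_. ?P {y. k \<le> y})"
    by simp
  have i2: "integrable (measure_pmf (Poi c)) (\<lambda>y::nat. if 0 < y then pmf (Poi t) (k - 1) else 0)"
    by (rule measure_pmf.integrable_const_bound[where B=1]) (auto simp: pmf_le_1)
  have "?P {y. k \<le> y} + pmf (Poi t) (k - 1) * (1 - exp (- c)) = (\<integral>y. ?g y \<partial>Poi c)"
    using c by (simp add: Bochner_Integration.integral_add[OF i1 i2] integral_indicator_pos_nat prob_Poi_pos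
        measure_pmf.prob_space)
  also have "\<dots> \<le> (\<integral>y. ?P {x. k - y \<le> x} \<partial>Poi c)"
    by (intro integral_mono Bochner_Integration.integrable_add[OF i1 i2] g_le
        measure_pmf.integrable_const_bound[where B=1]) auto
  also have "\<dots> = measure_pmf.prob (Poi (c + t)) {y. k \<le> y}"
    using conv_pmf_Poi[OF t c] by (simp add: prob_conv_pmf_atLeast[symmetric] add.commute)
  finally show ?thesis .
qed

section \<open>Domination at a single leaf\<close>

text \<open>The number of particles a leaf \<open>v\<^sub>i\<close>, \<open>i \<ge> 2\<close>, sends to \<open>\<emptyset>\<close>: it is activated iff one of its
  \<open>Poi(a + t)\<close> first-wave visitors arrives, and then sends \<open>Poi(t)\<close> particles to \<open>\<emptyset>\<close>.\<close>
definition second_wave_pmf :: "real \<Rightarrow> real \<Rightarrow> nat pmf" where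
  "second_wave_pmf a t = bind_pmf (Poi (a + t)) (\<lambda>z. if 0 < z then Poi t else return_pmf 0)"

lemma prob_conv_pmf_Poi_second_wave_atLeast_ge:
  assumes a: "a \<ge> 0" and t: "t \<ge> 0" and c: "c \<ge> 0"
  shows "measure_pmf.prob (Poi (c + t)) {y. k \<le> y} * (1 - exp (-(a + t)))
           \<le> measure_pmf.prob (conv_pmf (Poi c) (second_wave_pmf a t)) {y. k \<le> y}"
proof -
  let ?F = "\<lambda>z::nat. if 0 < z then Poi (c + t) else Poi c"
  have "conv_pmf (Poi c) (second_wave_pmf a t) = bind_pmf (Poi (a + t)) ?F"
    unfolding second_wave_pmf_def conv_pmf_bind_right
    by (intro bind_pmf_cong refl) (simp add: conv_pmf_Poi c t)
  then have "measure_pmf.prob (conv_pmf (Poi c) (second_wave_pmf a t)) {y. k \<le> y}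
      = (\<integral>z. measure_pmf.prob (?F z) {y. k \<le> y} \<partial>Poi (a + t))"
    by (simp add: measure_bind_pmf)
  also have "\<dots> \<ge> (\<integral>z. (if 0 < z then measure_pmf.prob (Poi (c + t)) {y. k \<le> y} else 0) \<partial>Poi (a + t))"
    by (intro integral_mono measure_pmf.integrable_const_bound[where B=1]) auto
  finally show ?thesis
    using a t by (simp add: integral_indicator_pos_nat prob_Poi_pos)
qed

lemma stoch_le_nat_Poi_conv_pmf_second_wave:
  assumes a: "a \<ge> 0" and t: "t \<ge> 0" and c: "c \<ge> 0"
    and ac: "exp (-a) \<le> (1 - exp (-a)) * (1 - exp (-c))"
  shows "stoch_le_nat (Poi t) (conv_pmf (Poi c) (second_wave_pmf a t))"
  unfolding stoch_le_nat_def
proof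
  fix k :: nat
  let ?P = "measure_pmf.prob (Poi t) {y. k \<le> y}"
  let ?P' = "measure_pmf.prob (Poi (c + t)) {y. k \<le> y}"
  let ?m = "pmf (Poi t) (k - 1)"
  let ?q = "exp (-(a + t))"
  show "?P \<le> measure_pmf.prob (conv_pmf (Poi c) (second_wave_pmf a t)) {y. k \<le> y}"
  proof (cases "k = 0")
    case False
    then have tail: "?P \<le> (exp t - 1) * ?m" and gain: "?P + ?m * (1 - exp (-c)) \<le> ?P'"
      using prob_Poi_atLeast_le[OF t] prob_Poi_add_atLeast_ge[OF t c] by simp_all
    have q: "?q * (exp t - 1) = exp (-a) * (1 - exp (-t))"
      by (simp add: exp_add[symmetric] exp_minus field_simps)
    have "?q * ?P \<le> ?q * ((exp t - 1) * ?m)"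
      by (intro mult_left_mono tail) simp
    also have "\<dots> = exp (-a) * (1 - exp (-t)) * ?m"
      by (simp only: mult.assoc[symmetric] q)
    also have "\<dots> \<le> exp (-a) * ?m"
      by (intro mult_right_mono) (simp_all add: mult_left_le)
    also have "\<dots> \<le> (1 - exp (-a)) * (1 - exp (-c)) * ?m"
      using ac by (intro mult_right_mono) simp_all
    also have "\<dots> \<le> (1 - ?q) * (1 - exp (-c)) * ?m"
      using a t c by (intro mult_right_mono) simp_all
    finally have "?q * ?P \<le> (1 - ?q) * (1 - exp (-c)) * ?m" .
    moreover have "(1 - ?q) * (?P + ?m * (1 - exp (-c))) \<le> (1 - ?q) * ?P'"
      using gain a t by (intro mult_left_mono) simp_all
    ultimately have "?P \<le> ?P' * (1 - ?q)"
      by (simp add: algebra_simps)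
    then show ?thesis
      using prob_conv_pmf_Poi_second_wave_atLeast_ge[OF a t c, of k] by linarith
  qed simp
qed

section \<open>Independent samples and Poisson thinning\<close>

lemma iid_list_Suc: "iid_list (Suc n) p = bind_pmf p (\<lambda>x. map_pmf (Cons x) (iid_list n p))"
  by (simp add: iid_list_def)

lemma pmf_iid_list_Suc_Nil: "pmf (iid_list (Suc n) p) [] = 0"
  by (simp add: iid_list_Suc pmf_bind pmf_map vimage_def)

lemma pmf_iid_list_Suc_Cons: "pmf (iid_list (Suc n) p) (y # ys) = pmf p y * pmf (iid_list n p) ys"
proof -
  have "pmf (map_pmf (Cons x) q) (y # ys) = (if x = y then pmf q ys else 0)" for x and q :: "'a list pmf"
    by (cases "x = y") (auto simp: pmf_map vimage_def measure_pmf_single)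
  then show ?thesis
    by (simp add: iid_list_Suc pmf_bind integral_measure_pmf_real[where A="{y}"] split: if_splits)
qed

lemma set_pmf_iid_list: "set_pmf (iid_list n p) = {w. length w = n \<and> set w \<subseteq> set_pmf p}"
  by (induction n) (auto simp: iid_list_def length_Suc_conv)

lemma iid_list_map_pmf: "iid_list n (map_pmf f p) = map_pmf (map f) (iid_list n p)"
  by (induction n) (simp_all add: iid_list_def bind_map_pmf map_bind_pmf pmf.map_comp o_def)

lemma pmf_iid_list_pmf_of_set:
  assumes "finite S" "S \<noteq> {}"
  shows "pmf (iid_list n (pmf_of_set S)) w =
           (if length w = n \<and> set w \<subseteq> S then (1 / real (card S)) ^ n else 0)"
proof (induction n arbitrary: w)
  case 0
  then show ?case by (cases w) (auto simp: iid_list_def)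
next
  case (Suc n)
  then show ?case
    using assms by (cases w) (auto simp: pmf_iid_list_Suc_Nil pmf_iid_list_Suc_Cons)
qed

lemma pmf_mset_iid_list_pmf_of_set:
  assumes "finite S" "S \<noteq> {}" "set_mset M \<subseteq> S"
  shows "pmf (map_pmf mset (iid_list n (pmf_of_set S))) M =
           (if n = size M then real (card (permutations_of_multiset M)) / real (card S) ^ n else 0)"
proof -
  have "pmf (map_pmf mset (iid_list n (pmf_of_set S))) M
      = (\<Sum>w\<in>permutations_of_multiset M. pmf (iid_list n (pmf_of_set S)) w)"
  proof -
    have "mset -` {M} = permutations_of_multiset M"
      by (auto simp: permutations_of_multiset_def)
    then show ?thesis
      by (simp add: pmf_map measure_measure_pmf_finite)
  qed
  also have "\<dots> = (\<Sum>w\<in>permutations_of_multiset M. if n = size M then (1 / real (card S)) ^ n else 0)"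
  proof (intro sum.cong refl)
    fix w assume "w \<in> permutations_of_multiset M"
    then have "length w = size M" "set w \<subseteq> S"
      using assms(3) by (auto simp: permutations_of_multiset_def simp flip: size_mset set_mset_mset)
    then show "pmf (iid_list n (pmf_of_set S)) w = (if n = size M then (1 / real (card S)) ^ n else 0)"
      using assms by (auto simp: pmf_iid_list_pmf_of_set)
  qed
  finally show ?thesis by (simp add: power_one_over)
qed

lemma card_permutations_of_multiset_prod_fact:
  assumes "finite S" "set_mset M \<subseteq> S"
  shows "real (card (permutations_of_multiset M)) * (\<Prod>j\<in>S. fact (count M j)) = fact (size M)"
proof -
  have "(\<Prod>j\<in>S. fact (count M j) :: nat) = (\<Prod>j\<in>set_mset M. fact (count M j))"
    using assms by (intro prod.mono_neutral_right) (auto simp: not_in_iff)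
  then have "card (permutations_of_multiset M) * (\<Prod>j\<in>S. fact (count M j) :: nat) = fact (size M)"
    using card_permutations_of_multiset_aux[of M] by simp
  then have "real (card (permutations_of_multiset M) * (\<Prod>j\<in>S. fact (count M j) :: nat)) = fact (size M)"
    by (metis of_nat_fact)
  then show ?thesis
    by (simp add: of_nat_prod)
qed

lemma pmf_Poi_multinomial:
  assumes S: "finite S" "S \<noteq> {}" and M: "set_mset M \<subseteq> S" and r: "r \<ge> 0"
  shows "pmf (Poi r) (size M) * (real (card (permutations_of_multiset M)) / real (card S) ^ size M)
           = (\<Prod>j\<in>S. pmf (Poi (r / card S)) (count M j))"
proof -
  have n: "card S > 0"
    using S by (simp add: card_gt_0_iff)
  have N: "size M = (\<Sum>j\<in>S. count M j)"
    unfolding size_multiset_overloaded_eq using S M by (intro sum.mono_neutral_left) auto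
  have "exp (- (r / card S)) ^ card S = exp (- r)"
    using n by (simp add: exp_of_nat_mult[symmetric])
  then have "(\<Prod>j\<in>S. pmf (Poi (r / card S)) (count M j))
      = (r / card S) ^ size M / (\<Prod>j\<in>S. fact (count M j)) * exp (- r)"
    using r by (simp add: pmf_Poi prod.distrib prod_dividef N power_sum)
  moreover have "(\<Prod>j\<in>S. fact (count M j) :: real) > 0"
    by (intro prod_pos) auto
  moreover note multinomial = card_permutations_of_multiset_prod_fact[OF S(1) M]
  ultimately show ?thesis
    using r n by (simp add: pmf_Poi multinomial[symmetric] field_simps power_divide)
qed

lemma Poi_thinning:
  fixes S :: "'a set"
  assumes S: "finite S" "S \<noteq> {}" and r: "r \<ge> 0"
  shows "bind_pmf (Poi r) (\<lambda>X. map_pmf (\<lambda>W. count (mset W)) (iid_list X (pmf_of_set S)))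
           = Pi_pmf S 0 (\<lambda>_. Poi (r / card S))"
proof (rule pmf_eqI)
  fix f :: "'a \<Rightarrow> nat"
  let ?K = "\<lambda>X. map_pmf (\<lambda>W. count (mset W)) (iid_list X (pmf_of_set S))"
  show "pmf (bind_pmf (Poi r) ?K) f = pmf (Pi_pmf S 0 (\<lambda>_. Poi (r / card S))) f"
  proof (cases "\<forall>x. x \<notin> S \<longrightarrow> f x = 0")
    case False
    have "pmf (?K X) f = 0" for X
      unfolding pmf_eq_0_set_pmf
    proof
      assume "f \<in> set_pmf (?K X)"
      then obtain W where W: "W \<in> set_pmf (iid_list X (pmf_of_set S))" "f = count (mset W)" by auto
      then have "set W \<subseteq> S" using S by (simp add: set_pmf_iid_list)
      then show False
        using False W(2) by (auto simp: count_eq_zero_iff)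
    qed
    then show ?thesis using False S by (auto simp: pmf_bind pmf_Pi)
  next
    case True
    define M where "M = (\<Sum>j\<in>S. replicate_mset (f j) j)"
    have f: "f = count M"
      using True S by (auto simp: M_def count_sum fun_eq_iff)
    have M: "set_mset M \<subseteq> S"
      using True by (auto simp: f count_eq_zero_iff)
    have "pmf (?K X) f = pmf (map_pmf mset (iid_list X (pmf_of_set S))) M" for X
      unfolding f by (subst pmf_map_inj'[symmetric, of count]) (simp_all add: inj_on_def multiset_eqI pmf.map_comp o_def)
    then have "pmf (bind_pmf (Poi r) ?K) f
        = pmf (Poi r) (size M) * (real (card (permutations_of_multiset M)) / real (card S) ^ size M)"
      using S M by (simp add: pmf_bind pmf_mset_iid_list_pmf_of_set integral_measure_pmf_real[where A="{size M}"] split: if_splits)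
    also have "\<dots> = pmf (Pi_pmf S 0 (\<lambda>_. Poi (r / card S))) f"
      unfolding pmf_Poi_multinomial[OF S M r] using S True by (simp add: pmf_Pi f)
    finally show ?thesis .
  qed
qed

lemma Poi_thinning_count:
  assumes "finite S" "x \<in> S" "r \<ge> 0"
  shows "bind_pmf (Poi r) (\<lambda>X. map_pmf (\<lambda>W. count (mset W) x) (iid_list X (pmf_of_set S)))
           = Poi (r / card S)"
proof -
  have "bind_pmf (Poi r) (\<lambda>X. map_pmf (\<lambda>W. count (mset W) x) (iid_list X (pmf_of_set S)))
     = map_pmf (\<lambda>f. f x) (bind_pmf (Poi r) (\<lambda>X. map_pmf (\<lambda>W. count (mset W)) (iid_list X (pmf_of_set S))))"
    by (simp add: map_bind_pmf pmf.map_comp o_def)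
  also have "\<dots> = Poi (r / card S)"
    using assms by (subst Poi_thinning) (auto simp: Pi_pmf_component)
  finally show ?thesis .
qed

section \<open>The operator on Poisson inputs\<close>

lemma count_concat_seq_pmf:
  "map_pmf (\<lambda>Ws. count (mset (concat Ws)) z) (seq_pmf qs)
     = conv_pmf_list (map (map_pmf (\<lambda>W. count (mset W) z)) qs)"
proof (induction qs)
  case (Cons q qs)
  have "map_pmf (\<lambda>Ws. count (mset (concat Ws)) z) (seq_pmf (q # qs))
      = bind_pmf q (\<lambda>W. map_pmf ((+) (count (mset W) z))
          (map_pmf (\<lambda>Ws. count (mset (concat Ws)) z) (seq_pmf qs)))"
    by (simp add: map_bind_pmf pmf.map_comp o_def)
  then show ?case
    by (simp add: Cons.IH conv_pmf_def bind_map_pmf)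
qed simp

lemma bind_iid_list_conv_pmf_list:
  "bind_pmf (iid_list m P) (\<lambda>ms. conv_pmf_list (map (\<lambda>k. H k (ms ! (k - s))) [s..<s+m]))
     = conv_pmf_list (map (\<lambda>k. bind_pmf P (H k)) [s..<s+m])"
proof (induction m arbitrary: s)
  case 0
  then show ?case by (simp add: iid_list_def)
next
  case (Suc m)
  have upt: "[s..<s + Suc m] = s # [Suc s..<Suc s + m]"
    by (simp add: upt_rec)
  have shift: "map (\<lambda>k. H k ((x # ms) ! (k - s))) [Suc s..<Suc s + m]
      = map (\<lambda>k. H k (ms ! (k - Suc s))) [Suc s..<Suc s + m]" for x ms
    by (intro map_cong refl) (auto simp: nth_Cons')
  have "bind_pmf (iid_list (Suc m) P) (\<lambda>ms. conv_pmf_list (map (\<lambda>k. H k (ms ! (k - s))) [s..<s + Suc m]))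
      = bind_pmf P (\<lambda>x. bind_pmf (iid_list m P) (\<lambda>ms.
          conv_pmf (H s x) (conv_pmf_list (map (\<lambda>k. H k (ms ! (k - Suc s))) [Suc s..<Suc s + m]))))"
    by (simp only: iid_list_Suc bind_map_pmf bind_assoc_pmf upt list.map conv_pmf_list.simps
        diff_self_eq_0 nth_Cons_0 shift)
  also have "\<dots> = bind_pmf P (\<lambda>x. conv_pmf (H s x) (conv_pmf_list (map (\<lambda>k. bind_pmf P (H k)) [Suc s..<Suc s + m])))"
    by (simp only: conv_pmf_bind_right[symmetric] Suc.IH)
  also have "\<dots> = conv_pmf_list (map (\<lambda>k. bind_pmf P (H k)) [s..<s + Suc m])"
    by (simp only: upt list.map conv_pmf_list.simps conv_pmf_bind_left)
  finally show ?case .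
qed

lemma bind_Pi_pmf_conv_pmf_list:
  assumes "finite A" "set ks \<subseteq> A" "distinct ks"
  shows "bind_pmf (Pi_pmf A dflt p) (\<lambda>g. conv_pmf_list (map (\<lambda>k. H k (g k)) ks))
           = conv_pmf_list (map (\<lambda>k. bind_pmf (p k) (H k)) ks)"
  using assms
proof (induction ks arbitrary: A)
  case Nil
  then show ?case by simp
next
  case (Cons k ks)
  let ?B = "A - {k}"
  have A: "A = insert k ?B" and B: "finite ?B" "set ks \<subseteq> ?B" "distinct ks"
    using Cons.prems by auto
  have upd: "map (\<lambda>j. H j ((f(k := y)) j)) ks = map (\<lambda>j. H j (f j)) ks" for f y
    using Cons.prems by (intro map_cong refl) auto
  have "bind_pmf (Pi_pmf A dflt p) (\<lambda>g. conv_pmf_list (map (\<lambda>j. H j (g j)) (k # ks)))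
      = bind_pmf (p k) (\<lambda>y. bind_pmf (Pi_pmf ?B dflt p) (\<lambda>f. conv_pmf (H k y) (conv_pmf_list (map (\<lambda>j. H j (f j)) ks))))"
    by (subst A, subst Pi_pmf_insert'[OF B(1)]) (simp_all add: bind_assoc_pmf bind_return_pmf upd fun_upd_same del: fun_upd_apply)
  also have "\<dots> = conv_pmf_list (map (\<lambda>j. bind_pmf (p j) (H j)) (k # ks))"
    by (simp add: conv_pmf_bind_right[symmetric] Cons.IH[OF B] conv_pmf_bind_left)
  finally show ?case .
qed

text \<open>\<open>W0\<close> and \<open>W1\<close> are the destinations of the first-wave particles from \<open>\<emptyset>'\<close> and \<open>v\<^sub>1\<close>, and
  \<open>ns ! (i - 1)\<close> is the (finite) number of particles at \<open>v\<^sub>i\<close>, as in \<open>opA\<close>.\<close>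
definition root_count_pmf :: "nat \<Rightarrow> nat list \<Rightarrow> nat list \<Rightarrow> nat list \<Rightarrow> nat pmf" where
  "root_count_pmf d ns W0 W1 =
    map_pmf (\<lambda>Ws. length (filter (\<lambda>j. j = 0) (W0 @ W1 @ concat Ws)))
      (seq_pmf (map (\<lambda>i. if i \<in> set W0 \<or> i \<in> set W1
                 then iid_list (ns ! (i - 1)) (pmf_of_set ({0..d} - {i}))
                 else return_pmf []) [2..<d+1]))"

definition opA_nat :: "nat \<Rightarrow> real \<Rightarrow> real \<Rightarrow> nat pmf" where
  "opA_nat d \<mu> lam =
    bind_pmf (Poi \<mu>) (\<lambda>X.
    bind_pmf (iid_list d (Poi lam)) (\<lambda>ns.
    bind_pmf (iid_list X (pmf_of_set {0..d})) (\<lambda>W0.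
    bind_pmf (iid_list (ns ! 0) (pmf_of_set ({0..d} - {1}))) (\<lambda>W1.
      root_count_pmf d ns W0 W1))))"

lemma opA_PoiE:
  assumes "d \<ge> 1"
  shows "opA d \<mu> (PoiE lam) = map_pmf enat (opA_nat d \<mu> lam)"
  unfolding opA_def opA_nat_def root_count_pmf_def PoiE_def iid_list_map_pmf bind_map_pmf map_bind_pmf Let_def
  apply (intro bind_pmf_cong refl)
  subgoal premises ns for X ns
  proof -
    have len: "length ns = d"
      using ns by (simp add: set_pmf_iid_list)
    have first: "map enat ns ! 0 = enat (ns ! 0)"
      using len assms by simp
    have no_inf: "(\<exists>i\<in>{2..d}. P i \<and> map enat ns ! (i - 1) = \<infinity>) = False" for P
      using len by auto
    have sites: "map (\<lambda>i. if P i then iid_list (the_enat (map enat ns ! (i - 1))) (U i) else return_pmf []) [2..<d+1]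
        = map (\<lambda>i. if P i then iid_list (ns ! (i - 1)) (U i) else return_pmf []) [2..<d+1]"
      for P and U :: "nat \<Rightarrow> nat pmf"
      using len by (intro map_cong) auto
    show ?thesis
      unfolding first no_inf sites the_enat.simps if_False
      by (simp add: map_pmf_def bind_assoc_pmf bind_return_pmf)
  qed
  done

text \<open>The number of particles that the leaf \<open>k \<ge> 2\<close> sends to \<open>\<emptyset>\<close> when \<open>x\<close> first-wave particles from \<open>\<emptyset>'\<close>
  and \<open>y\<close> from \<open>v\<^sub>1\<close> have landed on it; for \<open>k = 0\<close> these \<open>x + y\<close> particles themselves.\<close>
definition arrivals_pmf :: "real \<Rightarrow> nat \<Rightarrow> nat \<Rightarrow> nat \<Rightarrow> nat pmf" where
  "arrivals_pmf t k x y =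
    (if k = 0 then return_pmf (x + y) else if 0 < x + y then Poi t else return_pmf 0)"

lemma bind_Poi_Poi_arrivals_pmf:
  assumes "a \<ge> 0" "t \<ge> 0"
  shows "bind_pmf (Poi a) (\<lambda>x. bind_pmf (Poi t) (\<lambda>y. arrivals_pmf t k x y))
           = (if k = 0 then Poi (a + t) else second_wave_pmf a t)"
proof (cases "k = 0")
  case False
  then show ?thesis
    unfolding arrivals_pmf_def second_wave_pmf_def conv_pmf_Poi[OF assms, symmetric] conv_pmf_altdef
    by (simp add: bind_assoc_pmf bind_return_pmf)
qed (simp add: arrivals_pmf_def conv_pmf_Poi[OF assms, symmetric] conv_pmf_altdef)

lemma bind_iid_list_root_count_pmf:
  fixes d' :: nat and lam :: real
  assumes lam: "lam \<ge> 0"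
  defines "t \<equiv> lam / real (Suc d')"
  shows "bind_pmf (iid_list d' (Poi lam)) (\<lambda>ms. root_count_pmf (Suc d') (n1 # ms) W0 W1)
    = conv_pmf_list (map (\<lambda>k. arrivals_pmf t k (count (mset W0) k) (count (mset W1) k)) (0 # [2..<2+d']))"
proof -
  let ?c = "count (mset W0) 0 + count (mset W1) 0"
  let ?G = "\<lambda>k n. if k \<in> set W0 \<or> k \<in> set W1
      then map_pmf (\<lambda>W. count (mset W) 0) (iid_list n (pmf_of_set ({0..Suc d'} - {k}))) else return_pmf 0"
  have "length (filter (\<lambda>j. j = 0) xs) = count (mset xs) 0" for xs :: "nat list"
    by (induction xs) auto
  then have "map_pmf (\<lambda>Ws. length (filter (\<lambda>j. j = 0) (W0 @ W1 @ concat Ws))) (seq_pmf qs)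
      = map_pmf ((+) ?c) (conv_pmf_list (map (map_pmf (\<lambda>W. count (mset W) 0)) qs))" for qs
    by (simp add: add.assoc count_concat_seq_pmf[symmetric] pmf.map_comp o_def)
  moreover have "map (\<lambda>i. map_pmf (\<lambda>W. count (mset W) 0) (if i \<in> set W0 \<or> i \<in> set W1
          then iid_list ((n1 # ms) ! (i - 1)) (pmf_of_set ({0..Suc d'} - {i})) else return_pmf []))
        [2..<2+d'] = map (\<lambda>k. ?G k (ms ! (k - 2))) [2..<2+d']" for ms
    by (intro map_cong refl) (auto simp: nth_Cons' numeral_2_eq_2)
  moreover have "[2..<Suc d' + 1] = [2..<2+d']"
    by simp
  ultimately have "bind_pmf (iid_list d' (Poi lam)) (\<lambda>ms. root_count_pmf (Suc d') (n1 # ms) W0 W1)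
    = map_pmf ((+) ?c) (bind_pmf (iid_list d' (Poi lam)) (\<lambda>ms.
        conv_pmf_list (map (\<lambda>k. ?G k (ms ! (k - 2))) [2..<2+d'])))"
    unfolding root_count_pmf_def by (simp only: list.map_comp o_def map_bind_pmf)
  also have "\<dots> = map_pmf ((+) ?c) (conv_pmf_list (map (\<lambda>k. bind_pmf (Poi lam) (?G k)) [2..<2+d']))"
    using bind_iid_list_conv_pmf_list[of d' "Poi lam" ?G 2] by simp
  also have "\<dots> = conv_pmf_list (map (\<lambda>k. arrivals_pmf t k (count (mset W0) k) (count (mset W1) k)) (0 # [2..<2+d']))"
  proof -
    have "bind_pmf (Poi lam) (?G k) = arrivals_pmf t k (count (mset W0) k) (count (mset W1) k)"
      if "k \<in> set [2..<2+d']" for k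
      using that lam Poi_thinning_count[of "{0..Suc d'} - {k}" 0 lam] by (auto simp: t_def arrivals_pmf_def)
    then have "map_pmf ((+) ?c) (conv_pmf_list (map (\<lambda>k. bind_pmf (Poi lam) (?G k)) [2..<2+d']))
        = conv_pmf (return_pmf ?c)
            (conv_pmf_list (map (\<lambda>k. arrivals_pmf t k (count (mset W0) k) (count (mset W1) k)) [2..<2+d']))"
      by (simp only: conv_pmf_def bind_return_pmf cong: map_cong)
    then show ?thesis
      by (simp only: list.map conv_pmf_list.simps) (simp add: arrivals_pmf_def)
  qed
  finally show ?thesis .
qed

lemma opA_nat_Suc_eq_bind_Pi_pmf:
  fixes d' :: nat and lam \<mu> :: real
  assumes lam: "lam \<ge> 0" and mu: "\<mu> \<ge> 0"
  defines "a \<equiv> \<mu> / real (Suc (Suc d'))" and "t \<equiv> lam / real (Suc d')"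
  shows "opA_nat (Suc d') \<mu> lam =
    bind_pmf (Pi_pmf {0..Suc d'} 0 (\<lambda>_. Poi a)) (\<lambda>c0.
    bind_pmf (Pi_pmf ({0..Suc d'} - {1}) 0 (\<lambda>_. Poi t)) (\<lambda>c1.
      conv_pmf_list (map (\<lambda>k. arrivals_pmf t k (c0 k) (c1 k)) (0 # [2..<2+d']))))"
proof -
  let ?U = "\<lambda>i. pmf_of_set ({0..Suc d'} - {i})"
  let ?cnt = "\<lambda>W. count (mset W)"
  let ?F = "\<lambda>c0 c1. conv_pmf_list (map (\<lambda>k. arrivals_pmf t k (c0 k) (c1 k)) (0 # [2..<2+d']))"
  have "opA_nat (Suc d') \<mu> lam = bind_pmf (Poi \<mu>) (\<lambda>X. bind_pmf (Poi lam) (\<lambda>n1.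
      bind_pmf (iid_list d' (Poi lam)) (\<lambda>ms. bind_pmf (iid_list X (pmf_of_set {0..Suc d'})) (\<lambda>W0.
      bind_pmf (iid_list n1 (?U 1)) (\<lambda>W1. root_count_pmf (Suc d') (n1 # ms) W0 W1)))))"
    unfolding opA_nat_def iid_list_Suc by (simp add: bind_assoc_pmf bind_map_pmf)
  also have "\<dots> = bind_pmf (Poi \<mu>) (\<lambda>X. bind_pmf (iid_list X (pmf_of_set {0..Suc d'})) (\<lambda>W0.
      bind_pmf (Poi lam) (\<lambda>n1. bind_pmf (iid_list n1 (?U 1)) (\<lambda>W1. ?F (?cnt W0) (?cnt W1)))))"
    unfolding t_def bind_commute_pmf[of "iid_list d' (Poi lam)"] bind_commute_pmf[of "Poi lam"]
      bind_iid_list_root_count_pmf[OF lam] ..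
  also have "\<dots> = bind_pmf (bind_pmf (Poi \<mu>) (\<lambda>X. map_pmf ?cnt (iid_list X (pmf_of_set {0..Suc d'}))))
      (\<lambda>c0. bind_pmf (bind_pmf (Poi lam) (\<lambda>n1. map_pmf ?cnt (iid_list n1 (?U 1)))) (\<lambda>c1. ?F c0 c1))"
    by (simp only: bind_assoc_pmf bind_map_pmf)
  also have "bind_pmf (Poi \<mu>) (\<lambda>X. map_pmf ?cnt (iid_list X (pmf_of_set {0..Suc d'})))
      = Pi_pmf {0..Suc d'} 0 (\<lambda>_. Poi a)"
    using mu by (subst Poi_thinning) (auto simp: a_def)
  also have "bind_pmf (Poi lam) (\<lambda>n1. map_pmf ?cnt (iid_list n1 (?U 1)))
      = Pi_pmf ({0..Suc d'} - {1}) 0 (\<lambda>_. Poi t)"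
    using lam by (subst Poi_thinning) (auto simp: t_def)
  finally show ?thesis .
qed

lemma opA_nat_Poi:
  fixes d' :: nat and lam \<mu> :: real
  assumes lam: "lam \<ge> 0" and mu: "\<mu> \<ge> 0"
  defines "a \<equiv> \<mu> / real (Suc (Suc d'))" and "t \<equiv> lam / real (Suc d')"
  shows "opA_nat (Suc d') \<mu> lam = conv_pmf (Poi (a + t)) (conv_pmf_list (replicate d' (second_wave_pmf a t)))"
proof -
  have a: "a \<ge> 0" and t: "t \<ge> 0"
    using lam mu by (simp_all add: a_def t_def)
  let ?ks = "0 # [2..<2+d']"
  have "opA_nat (Suc d') \<mu> lam = bind_pmf (Pi_pmf {0..Suc d'} 0 (\<lambda>_. Poi a)) (\<lambda>c0.
      conv_pmf_list (map (\<lambda>k. bind_pmf (Poi t) (\<lambda>y. arrivals_pmf t k (c0 k) y)) ?ks))"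
    unfolding opA_nat_Suc_eq_bind_Pi_pmf[OF lam mu] a_def t_def
    by (intro bind_pmf_cong refl) (rule bind_Pi_pmf_conv_pmf_list; auto)
  also have "\<dots> = conv_pmf_list (map (\<lambda>k. bind_pmf (Poi a) (\<lambda>x. bind_pmf (Poi t) (\<lambda>y. arrivals_pmf t k x y))) ?ks)"
    by (rule bind_Pi_pmf_conv_pmf_list[where H="\<lambda>k x. bind_pmf (Poi t) (\<lambda>y. arrivals_pmf t k x y)"]) auto
  also have "\<dots> = conv_pmf_list (Poi (a + t) # map (\<lambda>_. second_wave_pmf a t) [2..<2+d'])"
  proof -
    have "(if k = 0 then Poi (a + t) else second_wave_pmf a t) = second_wave_pmf a t"
      if "k \<in> set [2..<2+d']" for k
      using that by (simp del: upt_Suc)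
    then show ?thesis
      unfolding bind_Poi_Poi_arrivals_pmf[OF a t] list.map by (simp only: simp_thms(6) if_True cong: map_cong)
  qed
  finally show ?thesis
    by (simp add: map_replicate_const del: upt_Suc)
qed

section \<open>The threshold for \<open>\<mu>\<close>\<close>

lemma exp_le_activation:
  fixes d :: nat and a :: real
  assumes d: "d \<ge> 2" and a: "a > 2 * ln (real d)"
  shows "exp (-a) \<le> (1 - exp (-a)) * (1 - exp (- (1 / (real d - 1))))"
proof -
  let ?x = "exp (-a)" and ?c = "1 / (real d - 1)"
  have d2: "real d \<ge> 2"
    using d by simp
  have "exp (2 * ln (real d)) = real d * real d"
    using d2 by (simp only: mult_2 exp_add) simp
  then have "?x < 1 / (real d * real d)"
    using a by (metis exp_less_cancel_iff exp_minus inverse_eq_divide neg_less_iff_less)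
  also have "\<dots> \<le> 1 / (real d + 1)"
  proof (rule divide_left_mono)
    show "real d + 1 \<le> real d * real d"
      using mult_right_mono[OF d2, of "real d"] d2 by linarith
  qed (use d2 in simp_all)
  finally have x: "?x * (real d + 1) < 1"
    using d2 by (simp add: less_divide_eq)
  have c0: "?c > 0"
    using d2 by simp
  have "exp (- ?c) = 1 / exp ?c"
    by (simp add: exp_minus inverse_eq_divide)
  also have "\<dots> \<le> 1 / (1 + ?c)"
    using c0 by (intro divide_left_mono exp_ge_add_one_self) (simp_all add: add_pos_pos)
  also have "\<dots> = 1 - 1 / real d"
    using d2 by (simp add: field_simps)
  finally have c: "1 / real d \<le> 1 - exp (- ?c)"
    by simp
  have "?x \<le> (1 - ?x) * (1 / real d)"
    using x d2 by (simp add: field_simps)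
  also have "\<dots> \<le> (1 - ?x) * (1 - exp (- ?c))"
  proof (rule mult_left_mono[OF c])
    have "?x \<le> ?x * (real d + 1)"
      using d2 by simp
    then show "0 \<le> 1 - ?x"
      using x by linarith
  qed
  finally show ?thesis .
qed

text \<open>Each of the \<open>d'\<close> independent \<open>Poi(t)\<close> summands is dominated by \<open>Poi(1/d') \<star> second_wave_pmf a t\<close>;
  the \<open>d'\<close> extra \<open>Poi(1/d')\<close> add up to \<open>Poi(1)\<close>, which together with \<open>Poi(a - 1)\<close> makes up \<open>Poi(a)\<close>.\<close>
lemma stoch_le_nat_Poi_conv_pmf_second_waves:
  fixes d' :: nat
  assumes a: "a \<ge> 1" and t: "t \<ge> 0" and d': "d' \<ge> 1"
    and act: "exp (-a) \<le> (1 - exp (-a)) * (1 - exp (- (1 / real d')))"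
  shows "stoch_le_nat (Poi (a - 1 + real (Suc d') * t))
           (conv_pmf (Poi (a + t)) (conv_pmf_list (replicate d' (second_wave_pmf a t))))"
proof -
  let ?c = "1 / real d'"
  let ?W = "conv_pmf_list (replicate d' (second_wave_pmf a t))"
  have "Poi (a - 1 + real (Suc d') * t) = conv_pmf (Poi (a - 1 + t)) (conv_pmf_list (replicate d' (Poi t)))"
    using a t by (simp add: conv_pmf_list_replicate_Poi conv_pmf_Poi algebra_simps)
  also have "stoch_le_nat \<dots> (conv_pmf (Poi (a - 1 + t)) (conv_pmf_list (replicate d' (conv_pmf (Poi ?c) (second_wave_pmf a t)))))"
    using a t act
    by (intro stoch_le_nat_conv_pmf stoch_le_nat_refl stoch_le_nat_conv_pmf_list)
       (simp add: list_all2_conv_all_nth stoch_le_nat_Poi_conv_pmf_second_wave)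
  also have "conv_pmf_list (replicate d' (conv_pmf (Poi ?c) (second_wave_pmf a t))) = conv_pmf (Poi 1) ?W"
    using d' by (simp add: conv_pmf_list_replicate_conv_pmf conv_pmf_list_replicate_Poi)
  also have "conv_pmf (Poi (a - 1 + t)) (conv_pmf (Poi 1) ?W) = conv_pmf (Poi (a + t)) ?W"
    using a t by (simp add: conv_pmf_assoc[symmetric] conv_pmf_Poi)
  finally show ?thesis .
qed

lemma stoch_le_PoiE_opA_PoiE:
  fixes d' :: nat and \<mu> lam :: real
  defines "a \<equiv> \<mu> / real (Suc (Suc d'))"
  assumes d': "d' \<ge> 1" and lam: "lam \<ge> 0" and a: "a \<ge> 1"
    and act: "exp (-a) \<le> (1 - exp (-a)) * (1 - exp (- (1 / real d')))"
  shows "stoch_le (PoiE (lam + (a - 1))) (opA (Suc d') \<mu> (PoiE lam))"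
proof -
  define t where "t = lam / real (Suc d')"
  have mu: "\<mu> \<ge> 0"
    using a by (simp add: a_def field_simps)
  have "opA_nat (Suc d') \<mu> lam = conv_pmf (Poi (a + t)) (conv_pmf_list (replicate d' (second_wave_pmf a t)))"
    unfolding a_def t_def by (rule opA_nat_Poi[OF lam mu])
  moreover have "lam + (a - 1) = a - 1 + real (Suc d') * t"
    by (simp add: t_def)
  ultimately have "stoch_le_nat (Poi (lam + (a - 1))) (opA_nat (Suc d') \<mu> lam)"
    using stoch_le_nat_Poi_conv_pmf_second_waves[OF a _ d' act, of t] lam by (simp add: t_def add.commute)
  then show ?thesis
    unfolding opA_PoiE[of "Suc d'", simplified] PoiE_def[of "lam + (a - 1)"]
    by (rule stoch_le_map_pmf_enat)
qed

theorem mainTheorem12: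
  fixes d :: nat and \<mu> :: real
  assumes "d \<ge> 2" and "\<mu> > 2 * (real d + 1) * ln (real d)"
  shows "\<exists>\<epsilon>>0. \<forall>lam::real. lam \<ge> 0 \<longrightarrow> stoch_le (PoiE (lam + \<epsilon>)) (opA d \<mu> (PoiE lam))"
proof -
  obtain d' where d: "d = Suc d'" and d': "d' \<ge> 1"
    using assms(1) by (cases d) auto
  define a where "a = \<mu> / real (Suc (Suc d'))"
  have a_ln: "a > 2 * ln (real d)"
    using assms(2) unfolding a_def d by (simp add: field_simps)
  moreover have "ln 2 \<le> ln (real d)"
    using assms(1) by simp
  ultimately have a: "a > 1"
    using ln2_ge_two_thirds by linarith
  have "exp (-a) \<le> (1 - exp (-a)) * (1 - exp (- (1 / real d')))"
    using exp_le_activation[OF assms(1) a_ln] by (simp add: d)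
  then show ?thesis
    using stoch_le_PoiE_opA_PoiE[OF d' _ _, of _ \<mu>, folded a_def] a unfolding d
    by (intro exI[of _ "a - 1"]) auto
qed

end
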